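(* Fix $n\geq 3$ and let $r>0$. Then $T^{\circ r}$ is positive definite for every positive definite matrix $T$ of the form below if and only if $r\geq 1$; likewise, $T^{\circ r}$ is positive semidefinite for every positive semidefinite matrix $T$ of the form below if and only if $r\geq 1$. Here $T$ ranges over the $n\times n$ symmetric tridiagonal matrices with diagonal entries $T_{ii}=a_i\geq 0$ ($1\le i\le n$), off-diagonal entries $T_{j,j+1}=T_{j+1,j}=b_j\geq 0$ ($1\le j\le n-1$), and all other entries zero.
   Context: For a nonnegative matrix $A=[a_{ij}]$ and $r>0$, the Hadamard power is $A^{\circ r}=[a_{ij}^r]$. Positive (semi)definite matrices are required to be symmetric. *)

theory Defs
  imports "HOL-Analysis.Analysis"
begin

text \<open>n x n real matrices represented as functions nat => nat => real,
  with indices ranging over {0..<n} (entries outside are irrelevant).\<close>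

definition sym_mat :: "nat \<Rightarrow> (nat \<Rightarrow> nat \<Rightarrow> real) \<Rightarrow> bool" where
  "sym_mat n A \<longleftrightarrow> (\<forall>i<n. \<forall>j<n. A i j = A j i)"

definition quad_form :: "nat \<Rightarrow> (nat \<Rightarrow> nat \<Rightarrow> real) \<Rightarrow> (nat \<Rightarrow> real) \<Rightarrow> real" where
  "quad_form n A x = (\<Sum>i<n. \<Sum>j<n. x i * A i j * x j)"

definition pos_def :: "nat \<Rightarrow> (nat \<Rightarrow> nat \<Rightarrow> real) \<Rightarrow> bool" where
  "pos_def n A \<longleftrightarrow> sym_mat n A \<and>
     (\<forall>x. (\<exists>i<n. x i \<noteq> 0) \<longrightarrow> quad_form n A x > 0)"

definition pos_semidef :: "nat \<Rightarrow> (nat \<Rightarrow> nat \<Rightarrow> real) \<Rightarrow> bool" where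
  "pos_semidef n A \<longleftrightarrow> sym_mat n A \<and> (\<forall>x. quad_form n A x \<ge> 0)"

definition hadamard_pow :: "(nat \<Rightarrow> nat \<Rightarrow> real) \<Rightarrow> real \<Rightarrow> (nat \<Rightarrow> nat \<Rightarrow> real)" where
  "hadamard_pow A r = (\<lambda>i j. A i j powr r)"

text \<open>Symmetric tridiagonal matrix with nonnegative diagonal a_i and
  nonnegative off-diagonal b_j (0-based indices: diagonal i < n,
  off-diagonal positions (j, j+1), (j+1, j) for j < n - 1), zero elsewhere.\<close>
definition nonneg_tridiag :: "nat \<Rightarrow> (nat \<Rightarrow> nat \<Rightarrow> real) \<Rightarrow> bool" where
  "nonneg_tridiag n T \<longleftrightarrow>
     (\<exists>a b :: nat \<Rightarrow> real.
        (\<forall>i<n. a i \<ge> 0) \<and> (\<forall>j. j + 1 < n \<longrightarrow> b j \<ge> 0) \<and>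
        (\<forall>i<n. \<forall>k<n. T i k =
           (if i = k then a i
            else if k = i + 1 then b i
            else if i = k + 1 then b k
            else 0)))"

end

theory Submission
  imports Defs
begin

text \<open>
  Sufficiency is an induction on the size via Schur complements. Eliminating the first variable
  from a positive (semi)definite tridiagonal matrix leaves a matrix of the same kind whose first
  diagonal entry drops from \<open>a\<^sub>1\<close> to \<open>c = a\<^sub>1 - b\<^sub>0\<^sup>2 / a\<^sub>0 \<ge> 0\<close>. For \<open>r \<ge> 1\<close> the
  function \<open>t powr r\<close> is superadditive, so \<open>a\<^sub>1\<^sup>r - c\<^sup>r \<ge> (b\<^sub>0\<^sup>2 / a\<^sub>0)\<^sup>r\<close>. Hence the form of the
  Hadamard power splits into a positive semidefinite \<open>2 \<times> 2\<close> form in the first two variables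
  plus the form of the Hadamard power of the Schur complement, which is handled by induction.

  For \<open>r < 1\<close> pick \<open>2 < c < 2 powr (1/r)\<close> and the matrix with diagonal \<open>(1, c, 1, ..., 1)\<close>
  and off-diagonal \<open>(1, 1, 0, ..., 0)\<close>. Its form
  \<open>(x\<^sub>0 + x\<^sub>1)\<^sup>2 + (x\<^sub>1 + x\<^sub>2)\<^sup>2 + (c - 2) x\<^sub>1\<^sup>2 + x\<^sub>3\<^sup>2 + ... + x\<^sub>n\<^sub>-\<^sub>1\<^sup>2\<close> is positive definite,
  while the form of its Hadamard power takes the value \<open>c\<^sup>r - 2 < 0\<close> at \<open>(1, -1, 1, 0, ..., 0)\<close>.
\<close>

definition tridiag :: "(nat \<Rightarrow> real) \<Rightarrow> (nat \<Rightarrow> real) \<Rightarrow> nat \<Rightarrow> nat \<Rightarrow> real" where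
  "tridiag a b = (\<lambda>i k. if i = k then a i else if k = i + 1 then b i
                         else if i = k + 1 then b k else 0)"

lemma tridiag_diag [simp]: "tridiag a b i i = a i"
  by (simp add: tridiag_def)

lemma sym_mat_tridiag [simp]: "sym_mat n (tridiag a b)"
  by (auto simp: sym_mat_def tridiag_def)

lemma hadamard_pow_tridiag:
  "hadamard_pow (tridiag a b) r = tridiag (\<lambda>i. a i powr r) (\<lambda>i. b i powr r)"
  by (auto simp: tridiag_def hadamard_pow_def fun_eq_iff)

lemma quad_form_0 [simp]: "quad_form 0 A x = 0"
  by (simp add: quad_form_def)

lemma quad_form_eq_0: "(\<And>i. i < n \<Longrightarrow> x i = 0) \<Longrightarrow> quad_form n A x = 0"
  by (simp add: quad_form_def)

lemma quad_form_cong: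
  "quad_form n A = quad_form n B" if "\<And>i j. i < n \<Longrightarrow> j < n \<Longrightarrow> A i j = B i j"
  using that by (simp add: quad_form_def fun_eq_iff)

lemma pos_def_cong:
  "pos_def n A = pos_def n B" if "\<And>i j. i < n \<Longrightarrow> j < n \<Longrightarrow> A i j = B i j"
  using quad_form_cong[OF that] that by (simp add: pos_def_def sym_mat_def)

lemma pos_semidef_cong:
  "pos_semidef n A = pos_semidef n B" if "\<And>i j. i < n \<Longrightarrow> j < n \<Longrightarrow> A i j = B i j"
  using quad_form_cong[OF that] that by (simp add: pos_semidef_def sym_mat_def)

lemma pos_def_imp_pos_semidef: "pos_def n A \<Longrightarrow> pos_semidef n A"
  unfolding pos_def_def pos_semidef_def
  by (metis less_imp_le order_refl quad_form_eq_0)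

lemma quad_form_unit_vector:
  assumes "j < n"
  shows "quad_form n A (\<lambda>i. if i = j then 1 else 0) = A j j"
proof -
  have "(if i = j then 1 else 0) * A i k * (if k = j then 1 else 0)
      = (if k = j then if i = j then A j j else 0 else 0)" for i k
    by simp
  then show ?thesis
    using assms by (simp add: quad_form_def)
qed

lemma pos_semidef_diag_nonneg: "pos_semidef n A \<Longrightarrow> j < n \<Longrightarrow> 0 \<le> A j j"
  by (metis pos_semidef_def quad_form_unit_vector)

lemma pos_defD: "pos_def n A \<Longrightarrow> i < n \<Longrightarrow> x i \<noteq> 0 \<Longrightarrow> 0 < quad_form n A x"
  unfolding pos_def_def by blast

lemma pos_def_diag_pos: "pos_def n A \<Longrightarrow> j < n \<Longrightarrow> 0 < A j j"
  using pos_defD[of n A j "\<lambda>i. if i = j then 1 else 0"] by (simp add: quad_form_unit_vector)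

lemma quad_form_Suc_shift:
  "quad_form (Suc n) A x = x 0 * A 0 0 * x 0
     + (\<Sum>j<n. x 0 * A 0 (Suc j) * x (Suc j)) + (\<Sum>i<n. x (Suc i) * A (Suc i) 0 * x 0)
     + quad_form n (\<lambda>i j. A (Suc i) (Suc j)) (\<lambda>i. x (Suc i))"
  unfolding quad_form_def sum.lessThan_Suc_shift sum.distrib by linarith

lemma quad_form_tridiag_Suc:
  "quad_form (Suc n) (tridiag a b) x = a 0 * (x 0)^2 + (if n = 0 then 0 else 2 * b 0 * x 0 * x 1)
     + quad_form n (tridiag (\<lambda>i. a (Suc i)) (\<lambda>i. b (Suc i))) (\<lambda>i. x (Suc i))"
proof -
  have shift: "(\<lambda>i j. tridiag a b (Suc i) (Suc j)) = tridiag (\<lambda>i. a (Suc i)) (\<lambda>i. b (Suc i))"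
    by (auto simp: tridiag_def fun_eq_iff)
  have row: "(\<Sum>j<n. x 0 * tridiag a b 0 (Suc j) * x (Suc j)) = (if n = 0 then 0 else b 0 * x 0 * x 1)"
   and col: "(\<Sum>i<n. x (Suc i) * tridiag a b (Suc i) 0 * x 0) = (if n = 0 then 0 else b 0 * x 0 * x 1)"
    by (cases n; simp only: sum.lessThan_Suc_shift; simp add: tridiag_def)+
  show ?thesis
    unfolding quad_form_Suc_shift shift row col by (simp add: power2_eq_square)
qed

lemma quad_form_tridiag_fun_upd_0:
  "0 < n \<Longrightarrow> quad_form n (tridiag (a(0 := d)) b) x = quad_form n (tridiag a b) x + (d - a 0) * (x 0)^2"
  by (cases n) (simp_all add: quad_form_tridiag_Suc algebra_simps)

lemma quad_form_tridiag_diagonal: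
  "quad_form n (tridiag a (\<lambda>_. 0)) x = (\<Sum>i<n. a i * (x i)^2)"
proof -
  have "x i * tridiag a (\<lambda>_. 0) i k * x k = (if k = i then a i * (x i)^2 else 0)" for i k
    by (simp add: tridiag_def power2_eq_square)
  then show ?thesis
    by (simp add: quad_form_def)
qed

text \<open>The Schur complement of the \<open>(0, 0)\<close> entry of \<open>tridiag a b\<close> is
  \<open>tridiag (schur_diag a b) (\<lambda>i. b (Suc i))\<close>. If \<open>a 0 = 0\<close>, division by zero makes
  \<open>schur_diag a b\<close> the plain shift of \<open>a\<close>, still the right reduction because then \<open>b 0 = 0\<close>.\<close>
definition schur_diag :: "(nat \<Rightarrow> real) \<Rightarrow> (nat \<Rightarrow> real) \<Rightarrow> nat \<Rightarrow> real" where
  "schur_diag a b = (\<lambda>i. a (Suc i))(0 := a 1 - (b 0)^2 / a 0)"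

lemma quad_form_tridiag_schur:
  "quad_form (Suc (Suc n)) (tridiag a b) (case_nat (- b 0 / a 0 * y 0) y)
     = quad_form (Suc n) (tridiag (schur_diag a b) (\<lambda>i. b (Suc i))) y"
  unfolding schur_diag_def quad_form_tridiag_fun_upd_0[OF zero_less_Suc]
  by (cases "a 0 = 0") (simp_all add: quad_form_tridiag_Suc field_simps power2_eq_square)

lemma pos_semidef_tridiag_schur:
  assumes "pos_semidef (Suc (Suc n)) (tridiag a b)"
  shows "pos_semidef (Suc n) (tridiag (schur_diag a b) (\<lambda>i. b (Suc i)))"
  unfolding pos_semidef_def
proof (intro conjI sym_mat_tridiag allI)
  fix y
  show "0 \<le> quad_form (Suc n) (tridiag (schur_diag a b) (\<lambda>i. b (Suc i))) y"
    using assms by (simp add: pos_semidef_def flip: quad_form_tridiag_schur)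
qed

lemma pos_def_tridiag_schur:
  assumes "pos_def (Suc (Suc n)) (tridiag a b)"
  shows "pos_def (Suc n) (tridiag (schur_diag a b) (\<lambda>i. b (Suc i)))"
  unfolding pos_def_def
proof (intro conjI sym_mat_tridiag allI impI)
  fix y :: "nat \<Rightarrow> real"
  assume "\<exists>i<Suc n. y i \<noteq> 0"
  then obtain i where "i < Suc n" "y i \<noteq> 0"
    by blast
  then have "0 < quad_form (Suc (Suc n)) (tridiag a b) (case_nat (- b 0 / a 0 * y 0) y)"
    using pos_defD[OF assms, of "Suc i"] by simp
  then show "0 < quad_form (Suc n) (tridiag (schur_diag a b) (\<lambda>i. b (Suc i))) y"
    by (simp only: quad_form_tridiag_schur)
qed

lemma pos_semidef_tridiag_zero_diag:
  assumes "pos_semidef (Suc (Suc n)) (tridiag a b)" and "a 0 = 0"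
  shows "b 0 = 0"
proof (rule ccontr)
  assume "b 0 \<noteq> 0"
  define e :: "nat \<Rightarrow> real" where "e = (\<lambda>i. if i = 0 then 1 else 0)"
  define t where "t = - (a 1 + 1) / (2 * b 0)"
  have "0 \<le> quad_form (Suc (Suc n)) (tridiag a b) (case_nat t e)"
    using assms(1) by (simp add: pos_semidef_def)
  also have "\<dots> = 2 * b 0 * t + a 1"
    using assms(2) quad_form_unit_vector[of 0 "Suc n"] by (simp add: quad_form_tridiag_Suc[of "Suc n"] e_def)
  also have "\<dots> = -1"
    using \<open>b 0 \<noteq> 0\<close> by (simp add: t_def)
  finally show False by simp
qed

lemma quad_form_tridiag_powr_schur:
  "quad_form (Suc (Suc n)) (tridiag (\<lambda>i. a i powr r) (\<lambda>i. b i powr r)) x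
     = a 0 powr r * (x 0)^2 + 2 * b 0 powr r * x 0 * x 1
       + (a 1 powr r - schur_diag a b 0 powr r) * (x 1)^2
       + quad_form (Suc n) (tridiag (\<lambda>i. schur_diag a b i powr r) (\<lambda>i. b (Suc i) powr r))
           (\<lambda>i. x (Suc i))"
proof -
  have "(\<lambda>i. schur_diag a b i powr r) = (\<lambda>i. a (Suc i) powr r)(0 := schur_diag a b 0 powr r)"
    by (auto simp: schur_diag_def fun_eq_iff)
  then show ?thesis
    by (simp add: quad_form_tridiag_fun_upd_0 quad_form_tridiag_Suc[of "Suc n"] algebra_simps)
qed

lemma superadditive_powr:
  fixes u v r :: real
  assumes "0 \<le> u" "0 \<le> v" "1 \<le> r"
  shows "u powr r + v powr r \<le> (u + v) powr r"
proof (cases "u + v = 0")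
  case True
  then have "u = 0" "v = 0"
    using assms by auto
  then show ?thesis by simp
next
  case False
  define w where "w = u + v"
  have w: "0 < w"
    using False assms by (simp add: w_def)
  have "(u / w) powr r \<le> (u / w) powr 1"
    by (rule powr_mono') (use assms w w_def in auto)
  then have u: "u powr r \<le> u / w * w powr r"
    using w assms by (simp add: powr_divide field_simps)
  have "(v / w) powr r \<le> (v / w) powr 1"
    by (rule powr_mono') (use assms w w_def in auto)
  then have v: "v powr r \<le> v / w * w powr r"
    using w assms by (simp add: powr_divide field_simps)
  have "u / w + v / w = 1"
    using w by (simp add: w_def flip: add_divide_distrib)
  then have "u / w * w powr r + v / w * w powr r = w powr r"
    by (metis distrib_right mult_1)
  then show ?thesis
    using u v by (simp add: w_def)
qed

lemma quadratic_2x2_nonneg: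
  fixes A B E x y :: real
  assumes "0 \<le> A" "0 \<le> E" "B^2 \<le> A * E"
  shows "0 \<le> A * x^2 + 2 * B * x * y + E * y^2"
proof (cases "A = 0")
  case True
  then show ?thesis using assms by simp
next
  case False
  have "A * (A * x^2 + 2 * B * x * y + E * y^2) = (A * x + B * y)^2 + (A * E - B^2) * y^2"
    by (simp add: power2_eq_square algebra_simps)
  also have "\<dots> \<ge> 0" using assms by simp
  finally show ?thesis using assms(1) False by (simp add: zero_le_mult_iff)
qed

lemma powr_schur_block_nonneg:
  fixes a b c d r :: real
  assumes "1 \<le> r" "0 \<le> a" "0 \<le> b" "0 \<le> c" "0 \<le> d" "b^2 = a * d"
  shows "0 \<le> a powr r * x^2 + 2 * b powr r * x * y + ((c + d) powr r - c powr r) * y^2"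
proof -
  have d: "d powr r \<le> (c + d) powr r - c powr r"
    using superadditive_powr[of c d r] assms by simp
  have "(b powr r)^2 = (b^2) powr r"
    using assms(3) by (simp add: powr_mult power2_eq_square)
  also have "\<dots> = a powr r * d powr r"
    using assms by (simp add: powr_mult)
  also have "\<dots> \<le> a powr r * ((c + d) powr r - c powr r)"
    using d by (simp add: mult_left_mono)
  finally have "(b powr r)^2 \<le> a powr r * ((c + d) powr r - c powr r)" .
  moreover have "0 \<le> (c + d) powr r - c powr r"
    using d powr_ge_zero[of d r] by linarith
  ultimately show ?thesis
    by (intro quadratic_2x2_nonneg) simp_all
qed

lemma tridiag_powr_schur_block_nonneg:
  assumes "1 \<le> r" "0 \<le> a 0" "0 \<le> b 0" "0 \<le> schur_diag a b 0" "a 0 = 0 \<Longrightarrow> b 0 = 0"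
  shows "0 \<le> a 0 powr r * (x 0)^2 + 2 * b 0 powr r * x 0 * x 1
              + (a 1 powr r - schur_diag a b 0 powr r) * (x 1)^2"
proof -
  have "(b 0)^2 = a 0 * ((b 0)^2 / a 0)"
    using assms(5) by (cases "a 0 = 0") auto
  moreover have "a 1 = schur_diag a b 0 + (b 0)^2 / a 0"
    by (simp add: schur_diag_def)
  ultimately show ?thesis
    using powr_schur_block_nonneg[OF assms(1-4), of "(b 0)^2 / a 0"] assms(2) by simp
qed

lemma pos_semidef_tridiag_hadamard_pow:
  assumes "1 \<le> r" "\<forall>j. Suc j < n \<longrightarrow> 0 \<le> b j" "pos_semidef n (tridiag a b)"
  shows "pos_semidef n (tridiag (\<lambda>i. a i powr r) (\<lambda>i. b i powr r))"
  using assms(2,3)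
proof (induction n arbitrary: a b)
  case 0
  then show ?case by (simp add: pos_semidef_def)
next
  case (Suc n)
  show ?case
  proof (cases n)
    case 0
    then show ?thesis by (simp add: pos_semidef_def quad_form_tridiag_Suc)
  next
    case (Suc m)
    have a0: "0 \<le> a 0" and b0: "0 \<le> b 0"
      using pos_semidef_diag_nonneg[OF Suc.prems(2), of 0] Suc.prems(1) Suc by auto
    have schur: "pos_semidef n (tridiag (schur_diag a b) (\<lambda>i. b (Suc i)))"
      using pos_semidef_tridiag_schur Suc.prems(2) Suc by blast
    have c: "0 \<le> schur_diag a b 0"
      using pos_semidef_diag_nonneg[OF schur, of 0] Suc by simp
    have "a 0 = 0 \<Longrightarrow> b 0 = 0"
      using pos_semidef_tridiag_zero_diag[of m a b] Suc.prems(2) Suc by simp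
    have IH: "pos_semidef n (tridiag (\<lambda>i. schur_diag a b i powr r) (\<lambda>i. b (Suc i) powr r))"
      using Suc.IH[OF _ schur] Suc.prems(1) by simp
    show ?thesis
      unfolding pos_semidef_def
    proof (intro conjI sym_mat_tridiag allI)
      fix x :: "nat \<Rightarrow> real"
      have block: "0 \<le> a 0 powr r * (x 0)^2 + 2 * b 0 powr r * x 0 * x 1
                      + (a 1 powr r - schur_diag a b 0 powr r) * (x 1)^2"
        by (rule tridiag_powr_schur_block_nonneg) (use assms(1) a0 b0 c \<open>a 0 = 0 \<Longrightarrow> b 0 = 0\<close> in auto)
      have tail: "0 \<le> quad_form (Suc m) (tridiag (\<lambda>i. schur_diag a b i powr r)
                         (\<lambda>i. b (Suc i) powr r)) (\<lambda>i. x (Suc i))"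
        using IH Suc by (simp add: pos_semidef_def)
      show "0 \<le> quad_form (Suc n) (tridiag (\<lambda>i. a i powr r) (\<lambda>i. b i powr r)) x"
        unfolding Suc quad_form_tridiag_powr_schur using block tail by linarith
    qed
  qed
qed

lemma pos_def_tridiag_hadamard_pow:
  assumes "1 \<le> r" "\<forall>j. Suc j < n \<longrightarrow> 0 \<le> b j" "pos_def n (tridiag a b)"
  shows "pos_def n (tridiag (\<lambda>i. a i powr r) (\<lambda>i. b i powr r))"
  using assms(2,3)
proof (induction n arbitrary: a b)
  case 0
  then show ?case by (simp add: pos_def_def)
next
  case (Suc n)
  have a0: "0 < a 0"
    using pos_def_diag_pos[OF Suc.prems(2), of 0] by simp
  show ?case
  proof (cases n)
    case 0
    then show ?thesis using a0 by (auto simp: pos_def_def quad_form_tridiag_Suc)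
  next
    case (Suc m)
    have b0: "0 \<le> b 0"
      using Suc.prems(1) Suc by auto
    have schur: "pos_def n (tridiag (schur_diag a b) (\<lambda>i. b (Suc i)))"
      using pos_def_tridiag_schur Suc.prems(2) Suc by blast
    have c: "0 \<le> schur_diag a b 0"
      using pos_def_diag_pos[OF schur, of 0] Suc by simp
    have IH: "pos_def n (tridiag (\<lambda>i. schur_diag a b i powr r) (\<lambda>i. b (Suc i) powr r))"
      using Suc.IH[OF _ schur] Suc.prems(1) by simp
    show ?thesis
      unfolding pos_def_def
    proof (intro conjI sym_mat_tridiag allI impI)
      fix x :: "nat \<Rightarrow> real"
      assume x: "\<exists>i<Suc n. x i \<noteq> 0"
      have block: "0 \<le> a 0 powr r * (x 0)^2 + 2 * b 0 powr r * x 0 * x 1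
                      + (a 1 powr r - schur_diag a b 0 powr r) * (x 1)^2"
        by (rule tridiag_powr_schur_block_nonneg) (use assms(1) a0 b0 c in auto)
      let ?tail = "quad_form (Suc m) (tridiag (\<lambda>i. schur_diag a b i powr r)
                     (\<lambda>i. b (Suc i) powr r)) (\<lambda>i. x (Suc i))"
      have "0 < a 0 powr r * (x 0)^2 + 2 * b 0 powr r * x 0 * x 1
                + (a 1 powr r - schur_diag a b 0 powr r) * (x 1)^2 + ?tail"
      proof (cases "\<exists>i<n. x (Suc i) \<noteq> 0")
        case True
        then obtain i where "i < n" "x (Suc i) \<noteq> 0"
          by blast
        then have "0 < ?tail"
          using pos_defD[OF IH, of i "\<lambda>i. x (Suc i)"] Suc by simp
        then show ?thesis using block by linarith
      next
        case False
        then have "?tail = 0" and "x 1 = 0"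
          using Suc by (auto intro: quad_form_eq_0)
        moreover have "x 0 \<noteq> 0"
          using x False by (metis less_Suc_eq_0_disj)
        ultimately show ?thesis using a0 by simp
      qed
      then show "0 < quad_form (Suc n) (tridiag (\<lambda>i. a i powr r) (\<lambda>i. b i powr r)) x"
        unfolding Suc quad_form_tridiag_powr_schur .
    qed
  qed
qed

lemma nonneg_tridiagE:
  assumes "nonneg_tridiag n T"
  obtains a b where "\<forall>i<n. \<forall>k<n. T i k = tridiag a b i k"
    and "\<forall>j. Suc j < n \<longrightarrow> 0 \<le> b j"
  using assms unfolding nonneg_tridiag_def tridiag_def by auto

lemma nonneg_tridiag_tridiag:
  assumes "\<forall>i<n. 0 \<le> a i" "\<forall>j. Suc j < n \<longrightarrow> 0 \<le> b j"
  shows "nonneg_tridiag n (tridiag a b)"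
  unfolding nonneg_tridiag_def
  by (rule exI[of _ a], rule exI[of _ b]) (use assms in \<open>simp add: tridiag_def\<close>)

lemma pos_semidef_hadamard_pow_nonneg_tridiag:
  assumes "1 \<le> r" "nonneg_tridiag n T" "pos_semidef n T"
  shows "pos_semidef n (hadamard_pow T r)"
proof -
  obtain a b where T: "\<forall>i<n. \<forall>k<n. T i k = tridiag a b i k"
    and b: "\<forall>j. Suc j < n \<longrightarrow> 0 \<le> b j"
    using assms(2) by (rule nonneg_tridiagE)
  have "pos_semidef n (tridiag a b)"
    using assms(3) pos_semidef_cong[of n T "tridiag a b"] T by simp
  then have "pos_semidef n (hadamard_pow (tridiag a b) r)"
    using pos_semidef_tridiag_hadamard_pow[OF assms(1) b] by (simp add: hadamard_pow_tridiag)
  then show ?thesis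
    using pos_semidef_cong[of n "hadamard_pow T r"] T by (simp add: hadamard_pow_def)
qed

lemma pos_def_hadamard_pow_nonneg_tridiag:
  assumes "1 \<le> r" "nonneg_tridiag n T" "pos_def n T"
  shows "pos_def n (hadamard_pow T r)"
proof -
  obtain a b where T: "\<forall>i<n. \<forall>k<n. T i k = tridiag a b i k"
    and b: "\<forall>j. Suc j < n \<longrightarrow> 0 \<le> b j"
    using assms(2) by (rule nonneg_tridiagE)
  have "pos_def n (tridiag a b)"
    using assms(3) pos_def_cong[of n T "tridiag a b"] T by simp
  then have "pos_def n (hadamard_pow (tridiag a b) r)"
    using pos_def_tridiag_hadamard_pow[OF assms(1) b] by (simp add: hadamard_pow_tridiag)
  then show ?thesis
    using pos_def_cong[of n "hadamard_pow T r"] T by (simp add: hadamard_pow_def)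
qed

lemma tridiag_hadamard_pow_counterexample:
  fixes r :: real
  assumes "3 \<le> n" "0 < r" "r < 1"
  shows "\<exists>T. nonneg_tridiag n T \<and> pos_def n T \<and> \<not> pos_semidef n (hadamard_pow T r)"
proof -
  define m where "m = n - 3"
  have n: "n = Suc (Suc (Suc m))"
    using assms(1) by (simp add: m_def)
  have "(2::real) powr 1 < 2 powr (1 / r)"
    using assms(2,3) by (intro powr_less_mono) (auto simp: field_simps)
  then have two: "2 < (2::real) powr (1 / r)"
    by simp
  define c where "c = (2 + 2 powr (1 / r)) / 2"
  have c: "2 < c"
    using two by (simp add: c_def)
  have "c powr r < (2 powr (1 / r)) powr r"
    using two c assms(2) by (intro powr_less_mono2) (auto simp: c_def)
  then have cr: "c powr r < 2"
    using assms(2) by (simp add: powr_powr)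
  define a :: "nat \<Rightarrow> real" where "a = (\<lambda>i. if i = 1 then c else 1)"
  define b :: "nat \<Rightarrow> real" where "b = (\<lambda>i. if i < 2 then 1 else 0)"
  have quad: "quad_form n (tridiag a b) x
      = (x 0 + x 1)^2 + (x 1 + x 2)^2 + (c - 2) * (x 1)^2 + (\<Sum>i<m. (x (Suc (Suc (Suc i))))^2)"
    for x
    by (simp add: n quad_form_tridiag_Suc quad_form_tridiag_diagonal a_def b_def
        sum.lessThan_Suc_shift power2_eq_square algebra_simps numeral_2_eq_2 del: sum.lessThan_Suc)
  have "pos_def n (tridiag a b)"
    unfolding pos_def_def quad
  proof (intro conjI sym_mat_tridiag allI impI)
    fix x :: "nat \<Rightarrow> real"
    assume "\<exists>i<n. x i \<noteq> 0"
    then obtain i where i: "i < n" "x i \<noteq> 0"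
      by blast
    have tail: "0 \<le> (\<Sum>i<m. (x (Suc (Suc (Suc i))))^2)"
      by (simp add: sum_nonneg)
    have head: "0 \<le> (x 0 + x 1)^2 + (x 1 + x 2)^2 + (c - 2) * (x 1)^2"
      using c by simp
    show "0 < (x 0 + x 1)^2 + (x 1 + x 2)^2 + (c - 2) * (x 1)^2
                + (\<Sum>i<m. (x (Suc (Suc (Suc i))))^2)"
    proof (cases "i \<le> 2")
      case True
      then have "i = 0 \<or> i = 1 \<or> i = 2"
        by auto
      then have "x 0 \<noteq> 0 \<or> x 1 \<noteq> 0 \<or> x 2 \<noteq> 0"
        using i by auto
      then have "0 < (x 0 + x 1)^2 + (x 1 + x 2)^2 + (c - 2) * (x 1)^2"
      proof (cases "x 1 = 0")
        case True
        then show ?thesis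
          using \<open>x 0 \<noteq> 0 \<or> x 1 \<noteq> 0 \<or> x 2 \<noteq> 0\<close> by (simp add: sum_power2_gt_zero_iff)
      next
        case False
        then have "0 < (c - 2) * (x 1)^2"
          using c by simp
        then show ?thesis
          using zero_le_power2[of "x 0 + x 1"] zero_le_power2[of "x 1 + x 2"] by linarith
      qed
      then show ?thesis
        using tail by linarith
    next
      case False
      have "\<exists>j. i = Suc (Suc (Suc j))"
        using False by presburger
      then obtain j where j: "i = Suc (Suc (Suc j))"
        by blast
      then have "0 < (\<Sum>i<m. (x (Suc (Suc (Suc i))))^2)"
        using i n by (intro sum_pos2[of _ j]) auto
      then show ?thesis
        using head by linarith
    qed
  qed
  moreover have "nonneg_tridiag n (tridiag a b)"
    by (rule nonneg_tridiag_tridiag) (use c in \<open>auto simp: a_def b_def\<close>)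
  moreover have "quad_form n (hadamard_pow (tridiag a b) r)
      (\<lambda>i. if i = 1 then -1 else if i \<le> 2 then 1 else 0) = c powr r - 2"
  proof -
    have "(\<lambda>i. a i powr r) = (\<lambda>i. if i = 1 then c powr r else 1)" "(\<lambda>i. b i powr r) = b"
      by (auto simp: a_def b_def)
    then show ?thesis
      by (simp add: hadamard_pow_tridiag n quad_form_tridiag_Suc quad_form_tridiag_diagonal
          b_def numeral_2_eq_2 sum.lessThan_Suc_shift del: sum.lessThan_Suc)
  qed
  then have "\<not> pos_semidef n (hadamard_pow (tridiag a b) r)"
    using cr unfolding pos_semidef_def by (metis diff_ge_0_iff_ge not_le)
  ultimately show ?thesis
    by blast
qed

theorem theorem1p2:
  fixes n :: nat and r :: real
  assumes "n \<ge> 3" and "r > 0"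
  shows "((\<forall>T. nonneg_tridiag n T \<and> pos_def n T \<longrightarrow> pos_def n (hadamard_pow T r))
            \<longleftrightarrow> r \<ge> 1)
       \<and> ((\<forall>T. nonneg_tridiag n T \<and> pos_semidef n T \<longrightarrow> pos_semidef n (hadamard_pow T r))
            \<longleftrightarrow> r \<ge> 1)"
proof -
  have "\<exists>T. nonneg_tridiag n T \<and> pos_def n T \<and> \<not> pos_semidef n (hadamard_pow T r)" if "r < 1"
    using tridiag_hadamard_pow_counterexample assms that by blast
  then show ?thesis
    using pos_def_hadamard_pow_nonneg_tridiag pos_semidef_hadamard_pow_nonneg_tridiag
      pos_def_imp_pos_semidef by (meson not_le)
qed

end
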